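(* Let $A,B\in\mathcal{B}(\mathcal{H})$ and let $B=X+iY$ be the Cartesian decomposition of $B$. Then: (i) if $XY+YX=0$, then $w(AB\pm BA^* )\leq 2\|A\|\max\{w^{1/2}(X^2),w^{1/2}(Y^2)\}$; (ii) if $B$ is self-adjoint, then $w(AB\pm BA^* )\leq 2\|A\|\,w^{1/2}(X^2)$; (iii) if $B$ is self-adjoint, then $w(AB)\leq\|A\|\,w^{1/2}(X^2)$.
   Context: $\mathcal{H}$ is a complex Hilbert space, $\mathcal{B}(\mathcal{H})$ the bounded linear operators on it, $w$ the numerical radius, $\|\cdot\|$ the operator norm. The Cartesian decomposition $B=X+iY$ means $X=\frac{B+B^*}{2}$, $Y=\frac{B-B^*}{2i}$ (both self-adjoint). *)

theory Defs
  imports "HOL-Analysis.Analysis"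
begin

class complex_vector = real_vector +
  fixes scaleC :: "complex \<Rightarrow> 'a \<Rightarrow> 'a" (infixr \<open>*\<^sub>C\<close> 75)
  assumes scaleC_add_right: "a *\<^sub>C (x + y) = a *\<^sub>C x + a *\<^sub>C y"
    and scaleC_add_left: "(a + b) *\<^sub>C x = a *\<^sub>C x + b *\<^sub>C x"
    and scaleC_scaleC: "a *\<^sub>C (b *\<^sub>C x) = (a * b) *\<^sub>C x"
    and scaleC_one: "1 *\<^sub>C x = x"
    and scaleR_scaleC: "scaleR r x = complex_of_real r *\<^sub>C x"

class complex_inner = complex_vector + real_normed_vector +
  fixes cinner :: "'a \<Rightarrow> 'a \<Rightarrow> complex"
  assumes cinner_commute: "cinner x y = cnj (cinner y x)"
    and cinner_add_left: "cinner (x + y) z = cinner x z + cinner y z"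
    and cinner_scaleC_left: "cinner (a *\<^sub>C x) y = a * cinner x y"
    and cinner_real: "Im (cinner x x) = 0"
    and cinner_ge_zero: "0 \<le> Re (cinner x x)"
    and cinner_eq_zero_iff: "cinner x x = 0 \<longleftrightarrow> x = 0"
    and norm_eq_sqrt_cinner: "norm x = sqrt (Re (cinner x x))"

class chilbert_space = complex_inner + complete_space

definition clinear :: "('a::complex_vector \<Rightarrow> 'b::complex_vector) \<Rightarrow> bool" where
  "clinear f \<longleftrightarrow> (\<forall>x y. f (x + y) = f x + f y) \<and> (\<forall>c x. f (c *\<^sub>C x) = c *\<^sub>C f x)"

definition bounded_clinear :: "('a::complex_inner \<Rightarrow> 'b::complex_inner) \<Rightarrow> bool" where
  "bounded_clinear f \<longleftrightarrow> clinear f \<and> (\<exists>K. \<forall>x. norm (f x) \<le> norm x * K)"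

definition is_adjoint :: "('a::complex_inner \<Rightarrow> 'a) \<Rightarrow> ('a \<Rightarrow> 'a) \<Rightarrow> bool" where
  "is_adjoint T S \<longleftrightarrow> (\<forall>x y. cinner (T x) y = cinner x (S y))"

text \<open>The Hilbert space adjoint T* (it exists and is unique for bounded T).\<close>
definition adj :: "('a::complex_inner \<Rightarrow> 'a) \<Rightarrow> ('a \<Rightarrow> 'a)" where
  "adj T = (THE S. is_adjoint T S)"

text \<open>Numerical radius w(T) = sup{|<Tx,x>| : ||x|| = 1}; the extra 0 only
  matters for the trivial space (where w(T) = 0).\<close>
definition numrad :: "('a::complex_inner \<Rightarrow> 'a) \<Rightarrow> real" where
  "numrad T = Sup (insert 0 {cmod (cinner (T x) x) | x. norm x = 1})"

end

theory Submission
  imports Defs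
begin

text \<open>For a unit vector \<open>x\<close> put \<open>y = A\<^sup>* x\<close>, \<open>u = X x\<close>, \<open>v = Y x\<close>. Since
  \<open>B = X + \<i> Y\<close> and \<open>B\<^sup>* = X - \<i> Y\<close>,
  \<open>\<langle>(AB + BA\<^sup>*) x, x\<rangle> = \<langle>u + \<i> v, y\<rangle> + \<langle>y, u - \<i> v\<rangle> = 2 Re \<langle>u, y\<rangle> + 2\<i> Re \<langle>v, y\<rangle>\<close>,
  and the difference \<open>AB - BA\<^sup>*\<close> is handled the same way with \<open>\<i> y\<close> in place of \<open>y\<close>.
  If \<open>XY + YX = 0\<close> then \<open>Re \<langle>u, v\<rangle> = 0\<close>, and a Bessel-type inequality bounds
  \<open>(Re \<langle>u, y\<rangle>)\<^sup>2 + (Re \<langle>v, y\<rangle>)\<^sup>2\<close> by \<open>max (\<parallel>u\<parallel>\<^sup>2) (\<parallel>v\<parallel>\<^sup>2) \<parallel>y\<parallel>\<^sup>2\<close>; finally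
  \<open>\<parallel>X x\<parallel>\<^sup>2 = \<langle>X\<^sup>2 x, x\<rangle> \<le> w(X\<^sup>2)\<close> and \<open>\<parallel>y\<parallel> \<le> \<parallel>A\<parallel>\<close>. For self-adjoint \<open>B\<close> we have
  \<open>Y = 0\<close>, and (iii) is Cauchy-Schwarz for \<open>\<langle>B x, A\<^sup>* x\<rangle>\<close>. The adjoint itself comes from
  the Riesz representation theorem, via the element of minimal norm in a closed hyperplane.\<close>

section \<open>Complex inner product spaces\<close>

lemma scaleC_zero_right [simp]: "a *\<^sub>C (0::'a::complex_vector) = 0"
  using scaleC_add_right[of a "0::'a" 0] by simp

lemma scaleC_zero_left [simp]: "0 *\<^sub>C (x::'a::complex_vector) = 0"
  using scaleR_scaleC[of 0 x] by simp

lemma scaleC_minus_left: "(- a) *\<^sub>C x = - (a *\<^sub>C (x::'a::complex_vector))"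
  using scaleC_add_left[of a "- a" x] by (simp add: add_eq_0_iff)

lemma scaleC_minus_right: "a *\<^sub>C (- x) = - (a *\<^sub>C (x::'a::complex_vector))"
  using scaleC_add_right[of a x "- x"] by (simp add: add_eq_0_iff)

lemma scaleC_diff_right: "a *\<^sub>C (x - y) = a *\<^sub>C x - a *\<^sub>C (y::'a::complex_vector)"
  using scaleC_add_right[of a x "- y"] scaleC_minus_right[of a y] by simp

lemma scaleC_half_add_half [simp]: "(1/2) *\<^sub>C x + (1/2) *\<^sub>C x = (x::'a::complex_vector)"
  using scaleC_add_left[of "1/2" "1/2" x] by (simp add: scaleC_one)

lemma cinner_add_right: "cinner x (y + z) = cinner x y + cinner (x::'a::complex_inner) z"
  by (metis cinner_add_left cinner_commute complex_cnj_add)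

lemma cinner_scaleC_right: "cinner x (a *\<^sub>C y) = cnj a * cinner x (y::'a::complex_inner)"
  by (metis cinner_commute cinner_scaleC_left complex_cnj_mult)

lemma cinner_zero_left [simp]: "cinner 0 (y::'a::complex_inner) = 0"
  using cinner_add_left[of "0::'a" 0 y] by simp

lemma cinner_zero_right [simp]: "cinner x (0::'a::complex_inner) = 0"
  using cinner_add_right[of x "0::'a" 0] by simp

lemma cinner_minus_left: "cinner (- x) y = - cinner x (y::'a::complex_inner)"
  using cinner_add_left[of x "- x" y] by (simp add: add_eq_0_iff)

lemma cinner_minus_right: "cinner x (- y) = - cinner x (y::'a::complex_inner)"
  using cinner_add_right[of x y "- y"] by (simp add: add_eq_0_iff)

lemma cinner_diff_left: "cinner (x - y) z = cinner x z - cinner y (z::'a::complex_inner)"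
  using cinner_add_left[of x "- y" z] cinner_minus_left[of y z] by simp

lemma cinner_diff_right: "cinner x (y - z) = cinner x y - cinner x (z::'a::complex_inner)"
  using cinner_add_right[of x y "- z"] cinner_minus_right[of x z] by simp

lemma cinner_scaleR_left: "cinner (r *\<^sub>R x) y = of_real r * cinner x (y::'a::complex_inner)"
  by (simp add: scaleR_scaleC cinner_scaleC_left)

lemma cinner_scaleR_right: "cinner x (r *\<^sub>R y) = of_real r * cinner x (y::'a::complex_inner)"
  by (simp add: scaleR_scaleC cinner_scaleC_right)

lemma cinner_self: "cinner x x = complex_of_real ((norm (x::'a::complex_inner))\<^sup>2)"
proof -
  have "(norm x)\<^sup>2 = Re (cinner x x)"
    using norm_eq_sqrt_cinner[of x] cinner_ge_zero[of x] by simp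
  then show ?thesis using cinner_real[of x] by (simp add: complex_eqI)
qed

lemma power2_norm_eq_Re_cinner: "(norm (x::'a::complex_inner))\<^sup>2 = Re (cinner x x)"
  by (simp add: cinner_self)

lemma cinner_ext_right:
  assumes "\<And>z. cinner z x = cinner z (y::'a::complex_inner)"
  shows "x = y"
proof -
  have "cinner (x - y) (x - y) = 0"
    using assms[of "x - y"] by (simp add: cinner_diff_right)
  then show ?thesis by (simp add: cinner_eq_zero_iff)
qed

lemma norm_scaleC: "norm (a *\<^sub>C (x::'a::complex_inner)) = cmod a * norm x"
proof -
  have "(norm (a *\<^sub>C x))\<^sup>2 = Re (a * cnj a * cinner x x)"
    by (simp add: power2_norm_eq_Re_cinner cinner_scaleC_left cinner_scaleC_right algebra_simps)
  also have "\<dots> = (cmod a * norm x)\<^sup>2"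
    by (metis Re_complex_of_real cinner_self complex_norm_square of_real_mult power_mult_distrib)
  finally show ?thesis
    by (metis norm_ge_zero power2_eq_imp_eq zero_le_mult_iff)
qed

lemma power2_norm_add_scaleC:
  "(norm (x + a *\<^sub>C y))\<^sup>2 =
     (norm x)\<^sup>2 + 2 * Re (cnj a * cinner x y) + (cmod a)\<^sup>2 * (norm (y::'a::complex_inner))\<^sup>2"
proof -
  have "cinner (x + a *\<^sub>C y) (x + a *\<^sub>C y) =
      cinner x x + cnj a * cinner x y + cnj (cnj a * cinner x y) + a * cnj a * cinner y y"
    by (simp add: cinner_add_left cinner_add_right cinner_scaleC_left cinner_scaleC_right
        cinner_commute[of y x] algebra_simps)
  moreover have "Re (a * cnj a * cinner y y) = (cmod a)\<^sup>2 * (norm y)\<^sup>2"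
    by (metis Re_complex_of_real cinner_self complex_norm_square of_real_mult)
  ultimately show ?thesis by (simp add: power2_norm_eq_Re_cinner)
qed

lemma power2_norm_sub_projection:
  assumes "y \<noteq> 0"
  shows "(norm (x - (cinner x y / of_real ((norm y)\<^sup>2)) *\<^sub>C y))\<^sup>2 =
         (norm x)\<^sup>2 - (cmod (cinner x (y::'a::complex_inner)))\<^sup>2 / (norm y)\<^sup>2"
proof -
  define c where "c = cinner x y"
  define n where "n = (norm y)\<^sup>2"
  have "n > 0" using assms by (simp add: n_def)
  have "x - (c / of_real n) *\<^sub>C y = x + (- c / of_real n) *\<^sub>C y"
    by (simp add: scaleC_minus_left)
  then have "(norm (x - (c / of_real n) *\<^sub>C y))\<^sup>2
      = (norm x)\<^sup>2 + 2 * Re (cnj (- c / of_real n) * c) + (cmod (- c / of_real n))\<^sup>2 * n"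
    by (simp only: power2_norm_add_scaleC c_def n_def)
  moreover have "Re (cnj (- c / of_real n) * c) = - ((cmod c)\<^sup>2 / n)"
    using cmod_power2[of c] by (simp add: power2_eq_square add_divide_distrib)
  moreover have "(cmod (- c / of_real n))\<^sup>2 * n = (cmod c)\<^sup>2 / n"
    using \<open>n > 0\<close> by (simp add: norm_divide power2_eq_square)
  ultimately show ?thesis
    unfolding c_def n_def by linarith
qed

lemma complex_Cauchy_Schwarz: "cmod (cinner x y) \<le> norm x * norm (y::'a::complex_inner)"
proof (cases "y = 0")
  case False
  have "0 \<le> (norm x)\<^sup>2 - (cmod (cinner x y))\<^sup>2 / (norm y)\<^sup>2"
    using power2_norm_sub_projection[OF False, of x] by (metis zero_le_power2)
  then have "(cmod (cinner x y))\<^sup>2 \<le> (norm x * norm y)\<^sup>2"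
    using False by (simp add: field_simps power_mult_distrib)
  then show ?thesis
    by (meson power2_le_imp_le mult_nonneg_nonneg norm_ge_zero)
qed simp

lemma cinner_eq_0_if_norm_minimal:
  assumes "\<And>c. norm x \<le> norm (x + c *\<^sub>C y)"
  shows "cinner x (y::'a::complex_inner) = 0"
proof (cases "y = 0")
  case False
  have "x - (cinner x y / of_real ((norm y)\<^sup>2)) *\<^sub>C y
      = x + (- cinner x y / of_real ((norm y)\<^sup>2)) *\<^sub>C y"
    by (simp add: scaleC_minus_left)
  then have "(norm x)\<^sup>2 \<le> (norm x)\<^sup>2 - (cmod (cinner x y))\<^sup>2 / (norm y)\<^sup>2"
    using power2_norm_sub_projection[OF False, of x] assms[of "- cinner x y / of_real ((norm y)\<^sup>2)"]
    by (metis norm_ge_zero power_mono)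
  then show ?thesis using False by (simp add: divide_le_0_iff)
qed simp

lemma parallelogram_law:
  "(norm (u - v))\<^sup>2 + (norm (u + v))\<^sup>2 = 2 * (norm u)\<^sup>2 + 2 * (norm (v::'a::complex_inner))\<^sup>2"
proof -
  have "u + v = u + 1 *\<^sub>C v" "u - v = u + (- 1) *\<^sub>C v"
    by (simp_all add: scaleC_one scaleC_minus_left)
  then show ?thesis by (simp only: power2_norm_add_scaleC) simp
qed

section \<open>Riesz representation and the adjoint\<close>

lemma power2_norm_diff_le_midpoint:
  fixes u v :: "'a::complex_inner"
  assumes "d \<le> norm ((1/2) *\<^sub>R (u + v))" "0 \<le> d" "norm u \<le> a" "norm v \<le> b"
  shows "(norm (u - v))\<^sup>2 \<le> 2 * a\<^sup>2 + 2 * b\<^sup>2 - 4 * d\<^sup>2"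
proof -
  have "(2 * d)\<^sup>2 \<le> (norm (u + v))\<^sup>2"
    using assms(1,2) by (intro power_mono) simp_all
  moreover have "(norm u)\<^sup>2 \<le> a\<^sup>2" "(norm v)\<^sup>2 \<le> b\<^sup>2"
    using assms(3,4) by (simp_all add: power_mono)
  ultimately show ?thesis
    using parallelogram_law[of u v] by (simp add: power_mult_distrib)
qed

lemma minimizing_sequence_Cauchy:
  fixes u :: "nat \<Rightarrow> 'a::complex_inner"
  assumes midpoint: "\<And>v w. v \<in> S \<Longrightarrow> w \<in> S \<Longrightarrow> (1/2) *\<^sub>R (v + w) \<in> S"
    and d0: "0 \<le> d" and lower: "\<And>v. v \<in> S \<Longrightarrow> d \<le> norm v"
    and in_S: "\<And>n. u n \<in> S"
    and minimizing: "\<And>n. norm (u n) \<le> d + inverse (real (Suc n))"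
  shows "Cauchy u"
proof -
  have dist_bound: "(norm (u n - u m))\<^sup>2 \<le> (8 * d + 4) * inverse (real (Suc N))"
    if "n \<ge> N" "m \<ge> N" for n m N
  proof -
    define a where "a = inverse (real (Suc n))"
    define b where "b = inverse (real (Suc m))"
    define e where "e = inverse (real (Suc N))"
    have a: "0 \<le> a" "a \<le> e" "e \<le> 1" and b: "0 \<le> b" "b \<le> e"
      using that by (auto simp: a_def b_def e_def field_simps)
    have "(norm (u n - u m))\<^sup>2 \<le> 2 * (d + a)\<^sup>2 + 2 * (d + b)\<^sup>2 - 4 * d\<^sup>2"
      using lower[OF midpoint[OF in_S[of n] in_S[of m]]] minimizing[of n] minimizing[of m] d0
      by (intro power2_norm_diff_le_midpoint) (simp_all add: a_def b_def)
    also have "\<dots> = 4 * d * a + 2 * a * a + 4 * d * b + 2 * b * b"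
      by (simp add: power2_eq_square algebra_simps)
    also have "\<dots> \<le> 4 * d * e + 2 * e + 4 * d * e + 2 * e"
    proof -
      have "a * a \<le> e" "b * b \<le> e"
        using a b mult_left_le[of a a] mult_left_le[of b b] by linarith+
      then show ?thesis
        using a b d0 by (intro add_mono mult_left_mono) auto
    qed
    finally show ?thesis by (simp add: e_def algebra_simps)
  qed
  show "Cauchy u"
  proof (rule metric_CauchyI)
    fix \<epsilon> :: real
    assume "0 < \<epsilon>"
    obtain N :: nat where N: "(8 * d + 4) / \<epsilon>\<^sup>2 < real N"
      using reals_Archimedean2 by blast
    have "(8 * d + 4) * inverse (real (Suc N)) < \<epsilon>\<^sup>2"
      using N \<open>0 < \<epsilon>\<close> d0 by (simp add: field_simps) (smt (verit) zero_less_power)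
    then have "dist (u m) (u n) < \<epsilon>" if "m \<ge> N" "n \<ge> N" for m n
      using dist_bound[OF that] \<open>0 < \<epsilon>\<close>
      by (metis dist_norm le_less_trans norm_ge_zero power2_less_imp_less less_imp_le)
    then show "\<exists>M. \<forall>m\<ge>M. \<forall>n\<ge>M. dist (u m) (u n) < \<epsilon>" by blast
  qed
qed

lemma closed_midpoint_convex_has_min_norm:
  fixes S :: "'a::chilbert_space set"
  assumes "S \<noteq> {}" "closed S"
    and midpoint: "\<And>v w. v \<in> S \<Longrightarrow> w \<in> S \<Longrightarrow> (1/2) *\<^sub>R (v + w) \<in> S"
  obtains z where "z \<in> S" "\<And>v. v \<in> S \<Longrightarrow> norm z \<le> norm v"
proof -
  define d where "d = Inf (norm ` S)"
  have lower: "d \<le> norm v" if "v \<in> S" for v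
    unfolding d_def by (rule cInf_lower) (use that in \<open>auto intro: bdd_belowI[of _ 0]\<close>)
  have d0: "0 \<le> d"
    unfolding d_def using \<open>S \<noteq> {}\<close> by (intro cInf_greatest) auto
  have "\<exists>v \<in> S. norm v < d + inverse (real (Suc n))" for n
  proof -
    have "Inf (norm ` S) < d + inverse (real (Suc n))"
      unfolding d_def by simp
    then show ?thesis
      using cInf_lessD[of "norm ` S"] \<open>S \<noteq> {}\<close> by blast
  qed
  then obtain u where in_S: "\<And>n. u n \<in> S"
    and minimizing: "\<And>n. norm (u n) < d + inverse (real (Suc n))"
    by metis
  have "Cauchy u"
    using minimizing_sequence_Cauchy[OF midpoint d0 lower in_S less_imp_le[OF minimizing]] .
  then obtain z where "u \<longlonglongrightarrow> z"
    using Cauchy_convergent_iff convergent_def by blast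
  have "norm z \<le> d"
  proof (rule tendsto_le[OF sequentially_bot])
    show "(\<lambda>n. d + inverse (real (Suc n))) \<longlonglongrightarrow> d"
      using tendsto_add[OF tendsto_const LIMSEQ_inverse_real_of_nat, of d] by simp
    show "(\<lambda>n. norm (u n)) \<longlonglongrightarrow> norm z"
      using tendsto_norm[OF \<open>u \<longlonglongrightarrow> z\<close>] .
    show "\<forall>\<^sub>F n in sequentially. norm (u n) \<le> d + inverse (real (Suc n))"
      using less_imp_le[OF minimizing] by simp
  qed
  moreover have "z \<in> S"
    using closed_sequentially[OF \<open>closed S\<close> in_S \<open>u \<longlonglongrightarrow> z\<close>] .
  ultimately show ?thesis
    using that lower order_trans by blast
qed

lemma riesz_representation:
  fixes f :: "'a::chilbert_space \<Rightarrow> complex"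
  assumes add: "\<And>x y. f (x + y) = f x + f y"
    and scale: "\<And>c x. f (c *\<^sub>C x) = c * f x"
    and bounded: "\<And>x. cmod (f x) \<le> norm x * K"
  obtains z where "\<And>x. f x = cinner x z"
proof (cases "\<forall>x. f x = 0")
  case True
  then show ?thesis using that[of 0] by simp
next
  case False
  then obtain x0 where "f x0 \<noteq> 0" by blast
  have diff: "f (x - y) = f x - f y" for x y
    using add[of "x - y" y] by simp
  have "bounded_linear f"
    by (rule bounded_linear_intro[where K=K])
      (auto simp: add scale scaleR_scaleC scaleR_conv_of_real bounded)
  define S where "S = f -` {1}"
  have "closed S"
    unfolding S_def by (intro closed_vimage closed_singleton linear_continuous_on \<open>bounded_linear f\<close>)
  moreover have "inverse (f x0) *\<^sub>C x0 \<in> S"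
    using \<open>f x0 \<noteq> 0\<close> by (simp add: S_def scale)
  moreover have "(1/2) *\<^sub>R (v + w) \<in> S" if "v \<in> S" "w \<in> S" for v w
    using that by (simp add: S_def scaleR_scaleC scale add)
  ultimately obtain z where "z \<in> S" and z_min: "\<And>v. v \<in> S \<Longrightarrow> norm z \<le> norm v"
    using closed_midpoint_convex_has_min_norm by blast
  then have "f z = 1" by (simp add: S_def)
  have orth: "cinner z h = 0" if "f h = 0" for h
    by (rule cinner_eq_0_if_norm_minimal, rule z_min) (simp add: S_def add scale that \<open>f z = 1\<close>)
  have "z \<noteq> 0"
    using \<open>f z = 1\<close> diff[of z z] by auto
  show ?thesis
  proof (rule that[of "inverse ((norm z)\<^sup>2) *\<^sub>R z"])
    fix x
    have "cinner z (x - f x *\<^sub>C z) = 0"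
      by (rule orth) (simp add: diff scale \<open>f z = 1\<close>)
    then have "cinner (x - f x *\<^sub>C z) z = 0"
      by (metis cinner_commute complex_cnj_zero)
    then have "cinner x z = f x * of_real ((norm z)\<^sup>2)"
      by (simp add: cinner_diff_left cinner_scaleC_left cinner_self)
    then show "f x = cinner x (inverse ((norm z)\<^sup>2) *\<^sub>R z)"
      using \<open>z \<noteq> 0\<close> by (simp add: cinner_scaleR_right field_simps)
  qed
qed

lemma bounded_clinear_imp_bounded_linear: "bounded_clinear T \<Longrightarrow> bounded_linear T"
  unfolding bounded_clinear_def clinear_def
  by (auto intro!: bounded_linear_intro simp: scaleR_scaleC)

lemma is_adjoint_adj:
  fixes T :: "'a::chilbert_space \<Rightarrow> 'a"
  assumes "bounded_clinear T"
  shows "is_adjoint T (adj T)"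
proof -
  obtain K where K: "\<And>x. norm (T x) \<le> norm x * K" and "clinear T"
    using assms unfolding bounded_clinear_def by blast
  have "\<exists>z. \<forall>x. cinner (T x) y = cinner x z" for y
  proof -
    have "cmod (cinner (T x) y) \<le> norm x * (K * norm y)" for x
      using complex_Cauchy_Schwarz[of "T x" y] mult_right_mono[OF K[of x], of "norm y"]
      by (simp add: mult.assoc)
    then show ?thesis
      using riesz_representation[of "\<lambda>x. cinner (T x) y" "K * norm y"] \<open>clinear T\<close>
      by (metis clinear_def cinner_add_left cinner_scaleC_left)
  qed
  then obtain S where S: "is_adjoint T S"
    unfolding is_adjoint_def by metis
  moreover have "S' = S" if "is_adjoint T S'" for S'
    using that S unfolding is_adjoint_def by (metis cinner_ext_right ext)
  ultimately show ?thesis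
    unfolding adj_def by (metis theI)
qed

lemma cinner_adj:
  fixes T :: "'a::chilbert_space \<Rightarrow> 'a"
  shows "bounded_clinear T \<Longrightarrow> cinner (T x) y = cinner x (adj T y)"
  using is_adjoint_adj by (auto simp: is_adjoint_def)

lemma cinner_adj_left:
  fixes T :: "'a::chilbert_space \<Rightarrow> 'a"
  shows "bounded_clinear T \<Longrightarrow> cinner (adj T x) y = cinner x (T y)"
  by (metis cinner_adj cinner_commute)

lemma norm_adj_le:
  fixes T :: "'a::chilbert_space \<Rightarrow> 'a"
  assumes "bounded_clinear T"
  shows "norm (adj T x) \<le> onorm T * norm x"
proof -
  have T: "bounded_linear T"
    using assms by (rule bounded_clinear_imp_bounded_linear)
  have "(norm (adj T x))\<^sup>2 = Re (cinner (T (adj T x)) x)"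
    using assms by (simp add: cinner_adj power2_norm_eq_Re_cinner)
  also have "\<dots> \<le> norm (T (adj T x)) * norm x"
    using complex_Re_le_cmod complex_Cauchy_Schwarz order_trans by blast
  also have "\<dots> \<le> onorm T * norm (adj T x) * norm x"
    by (intro mult_right_mono onorm[OF T]) simp
  finally have "norm (adj T x) * norm (adj T x) \<le> norm (adj T x) * (onorm T * norm x)"
    by (simp add: power2_eq_square algebra_simps)
  then show ?thesis
    using onorm_pos_le[OF T] by (cases "adj T x = 0") auto
qed

section \<open>Cartesian decomposition\<close>

definition re_part :: "('a::complex_inner \<Rightarrow> 'a) \<Rightarrow> 'a \<Rightarrow> 'a" where
  "re_part B x = (1/2) *\<^sub>C (B x + adj B x)"

definition im_part :: "('a::complex_inner \<Rightarrow> 'a) \<Rightarrow> 'a \<Rightarrow> 'a" where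
  "im_part B x = inverse (2 * \<i>) *\<^sub>C (B x - adj B x)"

lemma re_part_add_im_part: "re_part B x + \<i> *\<^sub>C im_part B x = B x"
proof -
  have "re_part B x + \<i> *\<^sub>C im_part B x = (1/2) *\<^sub>C (B x + adj B x) + (1/2) *\<^sub>C (B x - adj B x)"
    by (simp add: re_part_def im_part_def scaleC_scaleC)
  also have "\<dots> = (1/2) *\<^sub>C B x + (1/2) *\<^sub>C B x"
    by (simp add: scaleC_add_right scaleC_diff_right)
  finally show ?thesis by simp
qed

lemma re_part_diff_im_part: "re_part B x - \<i> *\<^sub>C im_part B x = adj B x"
proof -
  have "re_part B x - \<i> *\<^sub>C im_part B x = (1/2) *\<^sub>C (B x + adj B x) - (1/2) *\<^sub>C (B x - adj B x)"
    by (simp add: re_part_def im_part_def scaleC_scaleC)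
  also have "\<dots> = (1/2) *\<^sub>C adj B x + (1/2) *\<^sub>C adj B x"
    by (simp add: scaleC_add_right scaleC_diff_right)
  finally show ?thesis by simp
qed

lemma cinner_re_part:
  fixes B :: "'a::chilbert_space \<Rightarrow> 'a"
  assumes "bounded_clinear B"
  shows "cinner (re_part B x) y = cinner x (re_part B y)"
  using assms by (simp add: re_part_def cinner_scaleC_left cinner_scaleC_right cinner_add_left
      cinner_add_right cinner_adj cinner_adj_left algebra_simps)

lemma cinner_im_part:
  fixes B :: "'a::chilbert_space \<Rightarrow> 'a"
  assumes "bounded_clinear B"
  shows "cinner (im_part B x) y = cinner x (im_part B y)"
proof -
  have "cnj (inverse (2 * \<i>)) = - inverse (2 * \<i>)"
    by (simp add: complex_eq_iff)
  then show ?thesis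
    using assms by (simp add: im_part_def cinner_scaleC_left cinner_scaleC_right cinner_diff_left
        cinner_diff_right cinner_adj cinner_adj_left algebra_simps)
qed

lemma norm_re_part_le:
  fixes B :: "'a::chilbert_space \<Rightarrow> 'a"
  assumes "bounded_clinear B"
  shows "norm (re_part B x) \<le> norm x * onorm B"
proof -
  have "norm (re_part B x) \<le> (1/2) * (norm (B x) + norm (adj B x))"
    by (simp add: re_part_def norm_scaleC norm_triangle_ineq)
  also have "\<dots> \<le> norm x * onorm B"
    using onorm[OF bounded_clinear_imp_bounded_linear[OF assms], of x] norm_adj_le[OF assms, of x]
    by (simp add: algebra_simps)
  finally show ?thesis .
qed

lemma norm_im_part_le:
  fixes B :: "'a::chilbert_space \<Rightarrow> 'a"
  assumes "bounded_clinear B"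
  shows "norm (im_part B x) \<le> norm x * onorm B"
proof -
  have "norm (im_part B x) \<le> (1/2) * (norm (B x) + norm (adj B x))"
    by (simp add: im_part_def norm_scaleC norm_mult norm_triangle_ineq4)
  also have "\<dots> \<le> norm x * onorm B"
    using onorm[OF bounded_clinear_imp_bounded_linear[OF assms], of x] norm_adj_le[OF assms, of x]
    by (simp add: algebra_simps)
  finally show ?thesis .
qed

lemma re_part_selfadjoint:
  assumes "adj B = B"
  shows "re_part B = B"
  by (simp add: re_part_def assms scaleC_add_right fun_eq_iff)

lemma im_part_selfadjoint: "adj B = B \<Longrightarrow> im_part B = (\<lambda>_. 0)"
  by (simp add: im_part_def fun_eq_iff)

section \<open>Numerical radius\<close>

lemma numrad_le:
  assumes "0 \<le> c" "\<And>x. norm x = 1 \<Longrightarrow> cmod (cinner (T x) x) \<le> c"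
  shows "numrad T \<le> c"
  unfolding numrad_def using assms by (intro cSup_least) auto

lemma cmod_cinner_le_numrad:
  assumes "\<And>x. norm x = 1 \<Longrightarrow> cmod (cinner (T x) x) \<le> K" "norm x = 1"
  shows "cmod (cinner (T x) x) \<le> numrad T"
  unfolding numrad_def
  using assms by (intro cSup_upper) (auto simp: le_max_iff_disj intro!: bdd_aboveI[of _ "max 0 K"])

lemma numrad_nonneg:
  assumes "\<And>x. norm x = 1 \<Longrightarrow> cmod (cinner (T x) x) \<le> K"
  shows "0 \<le> numrad T"
  unfolding numrad_def
  using assms by (intro cSup_upper) (auto simp: le_max_iff_disj intro!: bdd_aboveI[of _ "max 0 K"])

lemma numrad_zero: "numrad (\<lambda>_. 0) = 0"
  by (rule antisym[OF numrad_le numrad_nonneg]) auto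

lemma cinner_square_selfadjoint:
  assumes "\<And>x y. cinner (S x) y = cinner x (S y)"
  shows "cinner (S (S x)) x = of_real ((norm (S x))\<^sup>2)"
  using assms by (simp add: cinner_self)

lemma cmod_cinner_square_selfadjoint_le:
  assumes "\<And>x y. cinner (S x) y = cinner x (S y)" "\<And>x. norm (S x) \<le> norm x * K" "norm x = 1"
  shows "cmod (cinner ((S \<circ> S) x) x) \<le> K\<^sup>2"
  using power_mono[OF assms(2)[of x] norm_ge_zero, of 2] assms(3)
  by (simp add: cinner_square_selfadjoint[OF assms(1)] norm_power)

lemma power2_norm_le_numrad_square:
  assumes "\<And>x y. cinner (S x) y = cinner x (S y)" "\<And>x. norm (S x) \<le> norm x * K" "norm x = 1"
  shows "(norm (S x))\<^sup>2 \<le> numrad (S \<circ> S)"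
proof -
  have "(norm (S x))\<^sup>2 = cmod (cinner ((S \<circ> S) x) x)"
    by (simp add: cinner_square_selfadjoint[OF assms(1)] norm_power)
  also have "\<dots> \<le> numrad (S \<circ> S)"
    by (rule cmod_cinner_le_numrad[OF cmod_cinner_square_selfadjoint_le[OF assms(1,2)] assms(3)])
  finally show ?thesis .
qed

lemma numrad_square_nonneg:
  assumes "\<And>x y. cinner (S x) y = cinner x (S y)" "\<And>x. norm (S x) \<le> norm x * K"
  shows "0 \<le> numrad (S \<circ> S)"
  using numrad_nonneg[OF cmod_cinner_square_selfadjoint_le[OF assms]] .

text \<open>Testing \<open>y\<close> against \<open>w = p u + r v\<close> with \<open>p = Re \<langle>u, y\<rangle>\<close>, \<open>r = Re \<langle>v, y\<rangle>\<close>
  gives \<open>p\<^sup>2 + r\<^sup>2 \<le> \<parallel>w\<parallel> \<parallel>y\<parallel>\<close>, while orthogonality gives \<open>\<parallel>w\<parallel>\<^sup>2 \<le> (p\<^sup>2 + r\<^sup>2) M\<close>.\<close>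
lemma sum_power2_Re_cinner_le:
  fixes u v y :: "'a::complex_inner"
  assumes orth: "Re (cinner u v) = 0" and "(norm u)\<^sup>2 \<le> M" "(norm v)\<^sup>2 \<le> M"
  shows "(Re (cinner u y))\<^sup>2 + (Re (cinner v y))\<^sup>2 \<le> M * (norm y)\<^sup>2"
proof -
  define p where "p = Re (cinner u y)"
  define r where "r = Re (cinner v y)"
  define s where "s = p\<^sup>2 + r\<^sup>2"
  define w where "w = p *\<^sub>R u + r *\<^sub>R v"
  have "0 \<le> M" "0 \<le> s"
    using assms(2) by (auto simp: s_def intro: order_trans[OF zero_le_power2])
  have "s = Re (cinner w y)"
    by (simp add: s_def p_def r_def w_def cinner_add_left cinner_scaleR_left power2_eq_square)
  also have "\<dots> \<le> norm w * norm y"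
    using complex_Re_le_cmod complex_Cauchy_Schwarz order_trans by blast
  finally have s_le: "s \<le> norm w * norm y" .
  have "cinner w w = of_real (p\<^sup>2) * cinner u u + of_real (r\<^sup>2) * cinner v v
      + of_real (p * r) * (cinner u v + cinner v u)"
    by (simp add: w_def cinner_add_left cinner_add_right cinner_scaleR_left cinner_scaleR_right
        power2_eq_square algebra_simps)
  moreover have "Re (cinner v u) = 0"
    using orth by (subst cinner_commute) simp
  ultimately have "(norm w)\<^sup>2 = p\<^sup>2 * (norm u)\<^sup>2 + r\<^sup>2 * (norm v)\<^sup>2"
    unfolding power2_norm_eq_Re_cinner using orth by simp
  also have "\<dots> \<le> s * M"
    using mult_left_mono[OF assms(2), of "p\<^sup>2"] mult_left_mono[OF assms(3), of "r\<^sup>2"]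
    by (simp add: s_def algebra_simps)
  finally have w_le: "(norm w)\<^sup>2 \<le> s * M" .
  have "s\<^sup>2 \<le> (norm w * norm y)\<^sup>2"
    using s_le \<open>0 \<le> s\<close> by (simp add: power_mono)
  also have "\<dots> \<le> s * M * (norm y)\<^sup>2"
    using w_le by (simp add: power_mult_distrib mult_right_mono)
  finally have "s * s \<le> s * (M * (norm y)\<^sup>2)"
    by (simp add: power2_eq_square algebra_simps)
  then have "s \<le> M * (norm y)\<^sup>2"
    using \<open>0 \<le> s\<close> \<open>0 \<le> M\<close> by (cases "s = 0") (auto simp: mult_le_cancel_left)
  then show ?thesis
    by (simp add: s_def p_def r_def)
qed

lemma cmod_cinner_cartesian_add_le:
  fixes u v y :: "'a::complex_inner"
  assumes "Re (cinner u v) = 0" "(norm u)\<^sup>2 \<le> M" "(norm v)\<^sup>2 \<le> M"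
  shows "cmod (cinner (u + \<i> *\<^sub>C v) y + cinner y (u - \<i> *\<^sub>C v)) \<le> 2 * sqrt M * norm y"
proof -
  define p where "p = Re (cinner u y)"
  define r where "r = Re (cinner v y)"
  have "cinner (u + \<i> *\<^sub>C v) y + cinner y (u - \<i> *\<^sub>C v) = Complex (2 * p) (2 * r)"
    by (simp add: p_def r_def cinner_add_left cinner_diff_right cinner_scaleC_left
        cinner_scaleC_right cinner_commute[of y u] cinner_commute[of y v] complex_eq_iff)
  moreover have "(2 * p)\<^sup>2 + (2 * r)\<^sup>2 = 2\<^sup>2 * (p\<^sup>2 + r\<^sup>2)"
    by (simp add: power_mult_distrib)
  ultimately have "cmod (cinner (u + \<i> *\<^sub>C v) y + cinner y (u - \<i> *\<^sub>C v)) = 2 * sqrt (p\<^sup>2 + r\<^sup>2)"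
    by (simp only: complex_norm real_sqrt_mult real_sqrt_abs abs_numeral)
  also have "\<dots> \<le> 2 * sqrt (M * (norm y)\<^sup>2)"
    using sum_power2_Re_cinner_le[OF assms] by (simp add: p_def r_def)
  also have "\<dots> = 2 * sqrt M * norm y"
    by (simp add: real_sqrt_mult)
  finally show ?thesis .
qed

text \<open>The difference at \<open>y\<close> is \<open>\<i>\<close> times the sum at \<open>\<i> y\<close>.\<close>
lemma cmod_cinner_cartesian_diff_le:
  fixes u v y :: "'a::complex_inner"
  assumes "Re (cinner u v) = 0" "(norm u)\<^sup>2 \<le> M" "(norm v)\<^sup>2 \<le> M"
  shows "cmod (cinner (u + \<i> *\<^sub>C v) y - cinner y (u - \<i> *\<^sub>C v)) \<le> 2 * sqrt M * norm y"
proof -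
  have "cinner (u + \<i> *\<^sub>C v) (\<i> *\<^sub>C y) + cinner (\<i> *\<^sub>C y) (u - \<i> *\<^sub>C v)
      = - \<i> * (cinner (u + \<i> *\<^sub>C v) y - cinner y (u - \<i> *\<^sub>C v))"
    by (simp add: cinner_scaleC_left cinner_scaleC_right algebra_simps)
  then show ?thesis
    using cmod_cinner_cartesian_add_le[OF assms, of "\<i> *\<^sub>C y"] by (simp add: norm_scaleC norm_mult)
qed

lemma Re_cinner_eq_0_if_anticommute:
  assumes "\<And>x y. cinner (X x) y = cinner x (X y)" "\<And>x y. cinner (Y x) y = cinner x (Y y)"
    and "X (Y x) + Y (X x) = 0"
  shows "Re (cinner (X x) (Y x)) = 0"
proof -
  have "cinner (X x) (Y x) = - cinner (X (Y x)) x"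
    using assms by (metis add_eq_0_iff cinner_minus_left)
  also have "\<dots> = - cnj (cinner (X x) (Y x))"
    using assms(1) by (metis cinner_commute)
  finally show ?thesis
    by (simp add: complex_eq_iff)
qed

lemma numrad_AB_pm_BA_adj_le:
  fixes A B :: "'a::chilbert_space \<Rightarrow> 'a"
  assumes A: "bounded_clinear A" and B: "bounded_clinear B"
    and orth: "\<And>x. Re (cinner (re_part B x) (im_part B x)) = 0"
  defines "M \<equiv> max (numrad (re_part B \<circ> re_part B)) (numrad (im_part B \<circ> im_part B))"
  shows "numrad (\<lambda>x. A (B x) + B (adj A x)) \<le> 2 * onorm A * sqrt M"
    and "numrad (\<lambda>x. A (B x) - B (adj A x)) \<le> 2 * onorm A * sqrt M"
proof -
  note re = cinner_re_part[OF B] norm_re_part_le[OF B]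
  note im = cinner_im_part[OF B] norm_im_part_le[OF B]
  have M: "(norm (re_part B x))\<^sup>2 \<le> M" "(norm (im_part B x))\<^sup>2 \<le> M" if "norm x = 1" for x
    using power2_norm_le_numrad_square[OF re that] power2_norm_le_numrad_square[OF im that]
    by (auto simp: M_def)
  have "0 \<le> M"
    using numrad_square_nonneg[OF re] by (simp add: M_def le_max_iff_disj)
  have "0 \<le> onorm A"
    using onorm_pos_le[OF bounded_clinear_imp_bounded_linear[OF A]] .
  have adj_A: "2 * sqrt M * norm (adj A x) \<le> 2 * onorm A * sqrt M" if "norm x = 1" for x
    using mult_left_mono[OF norm_adj_le[OF A, of x], of "2 * sqrt M"] that \<open>0 \<le> M\<close>
    by (simp add: algebra_simps)
  have expand: "cinner (A (B x)) x = cinner (re_part B x + \<i> *\<^sub>C im_part B x) (adj A x)"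
      "cinner (B (adj A x)) x = cinner (adj A x) (re_part B x - \<i> *\<^sub>C im_part B x)" for x
    by (simp_all add: cinner_adj A B re_part_add_im_part re_part_diff_im_part)
  show "numrad (\<lambda>x. A (B x) + B (adj A x)) \<le> 2 * onorm A * sqrt M"
  proof (rule numrad_le)
    fix x :: 'a
    assume "norm x = 1"
    have "cmod (cinner (A (B x) + B (adj A x)) x) \<le> 2 * sqrt M * norm (adj A x)"
      using cmod_cinner_cartesian_add_le[OF orth M[OF \<open>norm x = 1\<close>]]
      by (simp only: cinner_add_left expand)
    also have "\<dots> \<le> 2 * onorm A * sqrt M"
      using adj_A[OF \<open>norm x = 1\<close>] .
    finally show "cmod (cinner (A (B x) + B (adj A x)) x) \<le> 2 * onorm A * sqrt M" .
  qed (use \<open>0 \<le> M\<close> \<open>0 \<le> onorm A\<close> in simp)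
  show "numrad (\<lambda>x. A (B x) - B (adj A x)) \<le> 2 * onorm A * sqrt M"
  proof (rule numrad_le)
    fix x :: 'a
    assume "norm x = 1"
    have "cmod (cinner (A (B x) - B (adj A x)) x) \<le> 2 * sqrt M * norm (adj A x)"
      using cmod_cinner_cartesian_diff_le[OF orth M[OF \<open>norm x = 1\<close>]]
      by (simp only: cinner_diff_left expand)
    also have "\<dots> \<le> 2 * onorm A * sqrt M"
      using adj_A[OF \<open>norm x = 1\<close>] .
    finally show "cmod (cinner (A (B x) - B (adj A x)) x) \<le> 2 * onorm A * sqrt M" .
  qed (use \<open>0 \<le> M\<close> \<open>0 \<le> onorm A\<close> in simp)
qed

lemma numrad_AB_pm_BA_adj_selfadjoint_le:
  fixes A B :: "'a::chilbert_space \<Rightarrow> 'a"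
  assumes A: "bounded_clinear A" and B: "bounded_clinear B" and "adj B = B"
  shows "numrad (\<lambda>x. A (B x) + B (adj A x)) \<le> 2 * onorm A * sqrt (numrad (B \<circ> B))"
    and "numrad (\<lambda>x. A (B x) - B (adj A x)) \<le> 2 * onorm A * sqrt (numrad (B \<circ> B))"
proof -
  have "im_part B = (\<lambda>_. 0)" and "re_part B = B"
    using im_part_selfadjoint re_part_selfadjoint \<open>adj B = B\<close> by blast+
  moreover have "0 \<le> numrad (re_part B \<circ> re_part B)"
    using numrad_square_nonneg[OF cinner_re_part[OF B] norm_re_part_le[OF B]] .
  ultimately show "numrad (\<lambda>x. A (B x) + B (adj A x)) \<le> 2 * onorm A * sqrt (numrad (B \<circ> B))"
    and "numrad (\<lambda>x. A (B x) - B (adj A x)) \<le> 2 * onorm A * sqrt (numrad (B \<circ> B))"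
    using numrad_AB_pm_BA_adj_le[OF A B] by (simp_all add: comp_def numrad_zero max_absorb1)
qed

lemma numrad_comp_selfadjoint_le:
  fixes A B :: "'a::chilbert_space \<Rightarrow> 'a"
  assumes A: "bounded_clinear A" and B: "bounded_clinear B" and "adj B = B"
  shows "numrad (A \<circ> B) \<le> onorm A * sqrt (numrad (B \<circ> B))"
proof (rule numrad_le)
  have selfadjoint: "cinner (B x) y = cinner x (B y)" for x y
    using cinner_adj[OF B] \<open>adj B = B\<close> by simp
  have bounded: "norm (B x) \<le> norm x * onorm B" for x
    using onorm[OF bounded_clinear_imp_bounded_linear[OF B]] by (simp add: mult.commute)
  show "0 \<le> onorm A * sqrt (numrad (B \<circ> B))"
    using onorm_pos_le[OF bounded_clinear_imp_bounded_linear[OF A]]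
      numrad_square_nonneg[OF selfadjoint bounded] by simp
  fix x :: 'a
  assume "norm x = 1"
  have "cmod (cinner ((A \<circ> B) x) x) = cmod (cinner (B x) (adj A x))"
    by (simp add: cinner_adj[OF A])
  also have "\<dots> \<le> norm (B x) * norm (adj A x)"
    by (rule complex_Cauchy_Schwarz)
  also have "\<dots> \<le> sqrt (numrad (B \<circ> B)) * onorm A"
  proof (rule mult_mono)
    show "norm (B x) \<le> sqrt (numrad (B \<circ> B))"
      using power2_norm_le_numrad_square[OF selfadjoint bounded \<open>norm x = 1\<close>]
      by (simp add: real_le_rsqrt)
    show "norm (adj A x) \<le> onorm A"
      using norm_adj_le[OF A, of x] \<open>norm x = 1\<close> by simp
  qed (use numrad_square_nonneg[OF selfadjoint bounded] in simp_all)
  finally show "cmod (cinner ((A \<circ> B) x) x) \<le> onorm A * sqrt (numrad (B \<circ> B))"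
    by (simp add: mult.commute)
qed

theorem corollary2p14:
  fixes A B :: "'a::chilbert_space \<Rightarrow> 'a"
  assumes "bounded_clinear A" and "bounded_clinear B"
  defines "X \<equiv> (\<lambda>x. (1/2) *\<^sub>C (B x + adj B x))"
      and "Y \<equiv> (\<lambda>x. inverse (2 * \<i>) *\<^sub>C (B x - adj B x))"
  shows "((\<forall>x. X (Y x) + Y (X x) = 0) \<longrightarrow>
            numrad (\<lambda>x. A (B x) + B (adj A x))
              \<le> 2 * onorm A * max (sqrt (numrad (X \<circ> X))) (sqrt (numrad (Y \<circ> Y)))
          \<and> numrad (\<lambda>x. A (B x) - B (adj A x))
              \<le> 2 * onorm A * max (sqrt (numrad (X \<circ> X))) (sqrt (numrad (Y \<circ> Y))))
       \<and> (adj B = B \<longrightarrow>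
            numrad (\<lambda>x. A (B x) + B (adj A x)) \<le> 2 * onorm A * sqrt (numrad (X \<circ> X))
          \<and> numrad (\<lambda>x. A (B x) - B (adj A x)) \<le> 2 * onorm A * sqrt (numrad (X \<circ> X)))
       \<and> (adj B = B \<longrightarrow> numrad (A \<circ> B) \<le> onorm A * sqrt (numrad (X \<circ> X)))"
proof -
  note B = assms(2)
  have X_eq: "X = re_part B" and Y_eq: "Y = im_part B"
    by (simp_all add: X_def Y_def re_part_def im_part_def fun_eq_iff)
  have sqrt_max: "sqrt (max a b) = max (sqrt a) (sqrt b)" for a b :: real
    by (simp add: max_def)
  have orth: "Re (cinner (re_part B x) (im_part B x)) = 0"
    if "\<forall>x. re_part B (im_part B x) + im_part B (re_part B x) = 0" for x
    using Re_cinner_eq_0_if_anticommute[OF cinner_re_part[OF B] cinner_im_part[OF B]] that by blast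
  show ?thesis
    unfolding X_eq Y_eq
    using numrad_AB_pm_BA_adj_le[OF assms(1,2) orth]
      numrad_AB_pm_BA_adj_selfadjoint_le[OF assms(1,2)] numrad_comp_selfadjoint_le[OF assms(1,2)]
    by (simp add: re_part_selfadjoint sqrt_max)
qed

end
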